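(* Let $x$ be a stable g-matching with $x\ne x^{\max}$, let $f\in F$, and let $(a(1),c(1)),\dots,(a(k),c(k))$ be pairwise disjoint legal $f$-pairs under $x$ (all $2k$ edges distinct). Then for every $I\subseteq\{1,\dots,k\}$, $$C_f\Big(x_f+\sum_{i=1}^k\mathbf 1^{a(i)}-\sum_{i\in I}\mathbf 1^{c(i)}\Big)=x_f+\sum_{i=1}^k\mathbf 1^{a(i)}-\sum_{i=1}^k\mathbf 1^{c(i)}.$$
   Context: Let $G=(V,E)$ be a finite bipartite graph with color classes $W$ and $F$; the edge joining $w\in W$ and $f\in F$ is written $wf$. Let $b\in\mathbb Z_+^E$ be capacities. For $v\in V$, $E_v$ is the set of edges at $v$, $\mathcal B_v=\{z\in\mathbb Z_+^{E_v}: z\le b|_{E_v}\}$, $\mathbf 1^e$ the unit vector of $e$, $|z|=\sum_e|z(e)|$, $\wedge,\vee$ componentwise min/max. Each $v$ has a choice function $C_v:\mathcal B_v\to\mathcal B_v$ with $C_v(z)\le z$ and, for all $z,z'$: (A1) $z\ge z'\ge C_v(z)\Rightarrow C_v(z')=C_v(z)$; (A2) $z\ge z'\Rightarrow C_v(z)\wedge z'\le C_v(z')$; (A3) $z\ge z'\Rightarrow|C_v(z)|\ge|C_v(z')|$. $z$ is acceptable if $C_v(z)=z$; for distinct acceptable $z,z'$, $z'\prec_v z$ iff $C_v(z\vee z')=z$. $x_v$ = restriction of $x$ to $E_v$. A g-matching is $x\in\mathbb Z_+^E$, $x\le b$, each $x_v$ acceptable; $x\prec_F y$ (distinct) iff $x_f\preceq_f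 y_f$ for all $f\in F$. $e\in E_v$ is interesting for $v$ under acceptable $z$ if some $z'\in\mathcal B_v$ has $z'(e)>z(e)$, $z'(e')=z(e')$ for $e'\neq e$, $C_v(z')(e)>z(e)$; $e=wf$ is interesting for $v\in\{w,f\}$ under a g-matching $x$ if so under $x_v$, and blocks $x$ if interesting for both endpoints; stable g-matchings (no blocking edge) form a finite lattice under $\prec_F$ with maximum $x^{\max}$. For stable $x$, $U_F^+(x)$ is the set of edges $wf$ interesting for $f$ under $x$. A legal $f$-pair under $x$ is $(a,c)$ with $a\in U_F^+(x)\cap E_f$, $c\in E_f\setminus\{a\}$ and $C_f(x_f+\mathbf 1^a)=x_f+\mathbf 1^a-\mathbf 1^c$. *)

theory Defs
  imports Main "HOL-Library.Function_Algebras"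
begin

(* Bipartite graph: color classes are the types 'w (W) and 'f (F); an edge wf is the
   pair (w,f); E is the (finite) edge set.
   Vectors in Z_+^E (resp. Z_+^{E_v}) are functions edge => int, nonnegative and
   zero outside E (resp. E_v). *)

type_synonym ('w,'f) edge = "'w \<times> 'f"
type_synonym ('w,'f) vec = "('w,'f) edge \<Rightarrow> int"
type_synonym ('w,'f) vtx = "'w + 'f"

definition Ev :: "('w,'f) edge set \<Rightarrow> ('w,'f) vtx \<Rightarrow> ('w,'f) edge set" where
  "Ev E v = {e \<in> E. case v of Inl w \<Rightarrow> fst e = w | Inr f \<Rightarrow> snd e = f}"

definition Bv :: "('w,'f) edge set \<Rightarrow> ('w,'f) vec \<Rightarrow> ('w,'f) vtx \<Rightarrow> ('w,'f) vec set" where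
  "Bv E b v = {z. (\<forall>e. e \<notin> Ev E v \<longrightarrow> z e = 0) \<and> (\<forall>e \<in> Ev E v. 0 \<le> z e \<and> z e \<le> b e)}"

definition unitv :: "('w,'f) edge \<Rightarrow> ('w,'f) vec" where
  "unitv e = (\<lambda>e'. if e' = e then 1 else 0)"

definition vnorm :: "('w,'f) edge set \<Rightarrow> ('w,'f) vtx \<Rightarrow> ('w,'f) vec \<Rightarrow> int" where
  "vnorm E v z = (\<Sum>e \<in> Ev E v. \<bar>z e\<bar>)"

definition restr :: "('w,'f) edge set \<Rightarrow> ('w,'f) vtx \<Rightarrow> ('w,'f) vec \<Rightarrow> ('w,'f) vec" where
  "restr E v x = (\<lambda>e. if e \<in> Ev E v then x e else 0)"

(* standing assumptions: finite graph, capacities b in Z_+^E, choice functions with A1-A3 *)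
definition gm_model ::
  "('w,'f) edge set \<Rightarrow> ('w,'f) vec \<Rightarrow> (('w,'f) vtx \<Rightarrow> ('w,'f) vec \<Rightarrow> ('w,'f) vec) \<Rightarrow> bool" where
  "gm_model E b C \<longleftrightarrow> finite E \<and> (\<forall>e. 0 \<le> b e) \<and> (\<forall>e. e \<notin> E \<longrightarrow> b e = 0) \<and>
     (\<forall>v. \<forall>z \<in> Bv E b v. C v z \<in> Bv E b v \<and> C v z \<le> z) \<and>
     (\<forall>v. \<forall>z \<in> Bv E b v. \<forall>z' \<in> Bv E b v.
        (z \<ge> z' \<and> z' \<ge> C v z \<longrightarrow> C v z' = C v z) \<and>
        (z \<ge> z' \<longrightarrow> inf (C v z) z' \<le> C v z') \<and>
        (z \<ge> z' \<longrightarrow> vnorm E v (C v z) \<ge> vnorm E v (C v z')))"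

definition acceptable where
  "acceptable E b C v z \<longleftrightarrow> z \<in> Bv E b v \<and> C v z = z"

definition prec_v where
  "prec_v E b C v z' z \<longleftrightarrow> acceptable E b C v z \<and> acceptable E b C v z' \<and> z \<noteq> z' \<and>
     C v (sup z z') = z"

definition preceq_v where
  "preceq_v E b C v z' z \<longleftrightarrow> z' = z \<or> prec_v E b C v z' z"

definition gmatching where
  "gmatching E b C x \<longleftrightarrow> (\<forall>e. 0 \<le> x e) \<and> (\<forall>e. e \<notin> E \<longrightarrow> x e = 0) \<and> x \<le> b \<and>
     (\<forall>v. acceptable E b C v (restr E v x))"

definition precF where
  "precF E b C x y \<longleftrightarrow> x \<noteq> y \<and>
     (\<forall>f. preceq_v E b C (Inr f) (restr E (Inr f) x) (restr E (Inr f) y))"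

definition interesting_z where
  "interesting_z E b C v z e \<longleftrightarrow> e \<in> Ev E v \<and>
     (\<exists>z' \<in> Bv E b v. z' e > z e \<and> (\<forall>e'. e' \<noteq> e \<longrightarrow> z' e' = z e') \<and> C v z' e > z e)"

definition interesting where
  "interesting E b C v x e \<longleftrightarrow> interesting_z E b C v (restr E v x) e"

definition blocks where
  "blocks E b C e x \<longleftrightarrow> interesting E b C (Inl (fst e)) x e \<and> interesting E b C (Inr (snd e)) x e"

definition stable where
  "stable E b C x \<longleftrightarrow> gmatching E b C x \<and> (\<forall>e \<in> E. \<not> blocks E b C e x)"

definition is_xmax where
  "is_xmax E b C y \<longleftrightarrow> stable E b C y \<and> (\<forall>x. stable E b C x \<and> x \<noteq> y \<longrightarrow> precF E b C x y)"

definition UFplus where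
  "UFplus E b C x = {e \<in> E. interesting E b C (Inr (snd e)) x e}"

definition legal_pair where
  "legal_pair E b C f x a c \<longleftrightarrow> a \<in> UFplus E b C x \<inter> Ev E (Inr f) \<and> c \<in> Ev E (Inr f) - {a} \<and>
     C (Inr f) (restr E (Inr f) x + unitv a) = restr E (Inr f) x + unitv a - unitv c"

end

theory Submission
  imports Defs "HOL-Library.Indicator_Function"
begin

(* Write z = x_f, Z = z + sum_i 1^{a(i)} and T = Z - sum_i 1^{c(i)}. Since Z >= z + 1^{a(i)},
   substitutability (A2) and legality of (a(i), c(i)) give C_f(Z)(c(i)) <= z(c(i)) - 1, so
   C_f(Z) <= T. Size monotonicity (A3) gives |C_f(Z)| >= |C_f(z)| = |z| = |T|, hence
   C_f(Z) = T, and every vector between T and Z has the same choice by (A1). *)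

lemma sum_unitv_image:
  assumes "finite A" "inj_on g A"
  shows "(\<Sum>i\<in>A. unitv (g i)) = indicator (g ` A)"
  using assms
proof (induction A rule: finite_induct)
  case (insert i A)
  then have "g i \<notin> g ` A" by auto
  with insert show ?case by (auto simp: fun_eq_iff unitv_def indicator_def)
qed (simp add: fun_eq_iff)

lemma Bv_iff:
  "z \<in> Bv E b v \<longleftrightarrow>
     (\<forall>e. (e \<notin> Ev E v \<longrightarrow> z e = 0) \<and> (e \<in> Ev E v \<longrightarrow> 0 \<le> z e \<and> z e \<le> b e))"
  unfolding Bv_def mem_Collect_eq Ball_def by meson

lemma BvI:
  assumes "\<And>e. e \<notin> Ev E v \<Longrightarrow> z e = 0" "\<And>e. 0 \<le> z e" "\<And>e. e \<in> Ev E v \<Longrightarrow> z e \<le> b e"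
  shows "z \<in> Bv E b v"
  unfolding Bv_iff using assms by metis

lemma Bv_zero: "z \<in> Bv E b v \<Longrightarrow> e \<notin> Ev E v \<Longrightarrow> z e = 0"
  unfolding Bv_iff by metis

lemma Bv_le_capacity: "z \<in> Bv E b v \<Longrightarrow> e \<in> Ev E v \<Longrightarrow> z e \<le> b e"
  unfolding Bv_iff by metis

lemma Bv_nonneg: "z \<in> Bv E b v \<Longrightarrow> 0 \<le> z e"
  unfolding Bv_iff by (metis order_refl)

lemma Bv_downward_closed:
  assumes "Z \<in> Bv E b v" "\<And>e. 0 \<le> W e" "W \<le> Z"
  shows "W \<in> Bv E b v"
proof (rule BvI)
  fix e
  show "e \<notin> Ev E v \<Longrightarrow> W e = 0"
    using assms(2)[of e] le_funD[OF assms(3), of e] Bv_zero[OF assms(1), of e] by simp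
  show "e \<in> Ev E v \<Longrightarrow> W e \<le> b e"
    using le_funD[OF assms(3), of e] Bv_le_capacity[OF assms(1), of e] by simp
qed (fact assms(2))

lemma vnorm_Bv: "z \<in> Bv E b v \<Longrightarrow> vnorm E v z = sum z (Ev E v)"
  unfolding vnorm_def by (intro sum.cong) (simp_all add: Bv_nonneg)

lemma add_unitv_in_Bv_iff:
  assumes "z \<in> Bv E b v"
  shows "z + unitv e \<in> Bv E b v \<longleftrightarrow> e \<in> Ev E v \<and> z e + 1 \<le> b e"
proof
  assume sum_in: "z + unitv e \<in> Bv E b v"
  have "e \<in> Ev E v"
    using Bv_zero[OF sum_in, of e] Bv_zero[OF assms, of e] by (force simp: unitv_def)
  with Bv_le_capacity[OF sum_in this] show "e \<in> Ev E v \<and> z e + 1 \<le> b e"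
    by (simp add: unitv_def)
next
  assume "e \<in> Ev E v \<and> z e + 1 \<le> b e"
  then show "z + unitv e \<in> Bv E b v"
    by (intro BvI)
      (auto simp: unitv_def Bv_zero[OF assms] Bv_le_capacity[OF assms] Bv_nonneg[OF assms])
qed

lemma add_indicator_in_Bv:
  assumes "z \<in> Bv E b v" "\<forall>a\<in>A. z + unitv a \<in> Bv E b v"
  shows "z + indicator A \<in> Bv E b v"
  using assms add_unitv_in_Bv_iff[OF assms(1)]
  by (intro BvI)
    (auto simp: indicator_def Bv_zero[OF assms(1)] Bv_le_capacity[OF assms(1)] Bv_nonneg[OF assms(1)])

lemma interesting_z_add_unitv_in_Bv:
  assumes "z \<in> Bv E b v" "interesting_z E b C v z e"
  shows "z + unitv e \<in> Bv E b v"
proof -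
  obtain z' where "z' \<in> Bv E b v" "z e < z' e" and e: "e \<in> Ev E v"
    using assms(2) unfolding interesting_z_def by blast
  then have "z e + 1 \<le> b e" using Bv_le_capacity[of z' E b v e] by simp
  with e show ?thesis using add_unitv_in_Bv_iff[OF assms(1)] by blast
qed

locale choice_model =
  fixes E :: "('w,'f) edge set" and b :: "('w,'f) vec"
    and C :: "('w,'f) vtx \<Rightarrow> ('w,'f) vec \<Rightarrow> ('w,'f) vec"
  assumes gm_model: "gm_model E b C"
begin

lemma finite_Ev: "finite (Ev E v)"
  using gm_model unfolding gm_model_def Ev_def by simp

lemma choice_in_Bv: "z \<in> Bv E b v \<Longrightarrow> C v z \<in> Bv E b v"
  using gm_model unfolding gm_model_def by blast

lemma choice_le: "z \<in> Bv E b v \<Longrightarrow> C v z \<le> z"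
  using gm_model unfolding gm_model_def by blast

lemma choice_consistent:
  "z \<in> Bv E b v \<Longrightarrow> z' \<in> Bv E b v \<Longrightarrow> z' \<le> z \<Longrightarrow> C v z \<le> z' \<Longrightarrow> C v z' = C v z"
  using gm_model unfolding gm_model_def by blast

lemma choice_substitutable:
  "z \<in> Bv E b v \<Longrightarrow> z' \<in> Bv E b v \<Longrightarrow> z' \<le> z \<Longrightarrow> inf (C v z) z' \<le> C v z'"
  using gm_model unfolding gm_model_def by blast

lemma choice_size_mono:
  "z \<in> Bv E b v \<Longrightarrow> z' \<in> Bv E b v \<Longrightarrow> z' \<le> z \<Longrightarrow> vnorm E v (C v z') \<le> vnorm E v (C v z)"
  using gm_model unfolding gm_model_def by blast

lemma choice_eq_if_le_of_size:
  assumes "Z \<in> Bv E b v" "T \<in> Bv E b v" "C v Z \<le> T" "vnorm E v T \<le> vnorm E v (C v Z)"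
  shows "C v Z = T"
proof
  fix e
  have CZ: "C v Z \<in> Bv E b v" using choice_in_Bv[OF assms(1)] .
  have "sum (C v Z) (Ev E v) = sum T (Ev E v)"
    using assms(4) sum_mono[of "Ev E v" "C v Z" T] le_funD[OF assms(3)]
    by (simp add: vnorm_Bv[OF CZ] vnorm_Bv[OF assms(2)])
  then show "C v Z e = T e"
    using sum_mono_inv[OF _ le_funD[OF assms(3)] _ finite_Ev] Bv_zero[OF CZ] Bv_zero[OF assms(2)]
    by (cases "e \<in> Ev E v") simp_all
qed

lemma choice_removed_edge_pos:
  assumes "z + unitv a \<in> Bv E b v" "C v (z + unitv a) = z + unitv a - unitv d" "d \<noteq> a"
  shows "1 \<le> z d"
  using Bv_nonneg[OF choice_in_Bv[OF assms(1)], of d] assms(2,3) by (simp add: unitv_def)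

lemma choice_le_remove_paired:
  assumes "z \<in> Bv E b v" "\<forall>a\<in>A. z + unitv a \<in> Bv E b v"
    and "\<forall>d\<in>D. \<exists>a\<in>A. C v (z + unitv a) = z + unitv a - unitv d" and "A \<inter> D = {}"
  shows "C v (z + indicator A) \<le> z + indicator A - indicator D"
proof (rule le_funI)
  fix e
  define Z where "Z = z + indicator A"
  have Z: "Z \<in> Bv E b v"
    unfolding Z_def using add_indicator_in_Bv[OF assms(1,2)] .
  show "C v Z e \<le> (Z - indicator D) e"
  proof (cases "e \<in> D")
    case False
    then show ?thesis using le_funD[OF choice_le[OF Z], of e] by simp
  next
    case True
    then obtain a where a: "a \<in> A" "C v (z + unitv a) = z + unitv a - unitv e"
      using assms(3) by blast
    have e: "e \<notin> A" "e \<noteq> a" using True a(1) assms(4) by auto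
    have "z + unitv a \<le> Z"
      using a(1) by (auto simp: Z_def le_fun_def unitv_def indicator_def)
    then have "inf (C v Z) (z + unitv a) \<le> C v (z + unitv a)"
      using choice_substitutable[OF Z] assms(2) a(1) by blast
    then have "inf (C v Z) (z + unitv a) e \<le> C v (z + unitv a) e"
      by (rule le_funD)
    then show ?thesis using a(2) e True by (auto simp: Z_def unitv_def inf_min)
  qed
qed

lemma choice_add_remove_paired:
  assumes acc: "z \<in> Bv E b v" "C v z = z"
    and add: "\<forall>a\<in>A. z + unitv a \<in> Bv E b v"
    and paired: "\<forall>d\<in>D. \<exists>a\<in>A. C v (z + unitv a) = z + unitv a - unitv d"
    and disj: "A \<inter> D = {}" and card_le: "card A \<le> card D" and "D' \<subseteq> D"
  shows "C v (z + indicator A - indicator D') = z + indicator A - indicator D"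
proof -
  define Z T Y where "Z = z + indicator A" and "T = z + indicator A - indicator D"
    and "Y = z + indicator A - indicator D'"
  have Z: "Z \<in> Bv E b v"
    unfolding Z_def using add_indicator_in_Bv[OF acc(1) add] .
  have A_Ev: "A \<subseteq> Ev E v"
    using add add_unitv_in_Bv_iff[OF acc(1)] by blast
  have D_pos: "1 \<le> z d" if "d \<in> D" for d
    using paired choice_removed_edge_pos add disj that by fast
  have D_Ev: "D \<subseteq> Ev E v"
    using D_pos Bv_zero[OF acc(1)] by force
  have T_nonneg: "0 \<le> T e" for e
    using D_pos[of e] Bv_nonneg[OF acc(1), of e] by (auto simp: T_def indicator_def)
  have "T \<le> Y" "Y \<le> Z"
    using \<open>D' \<subseteq> D\<close> by (auto simp: T_def Y_def Z_def le_fun_def indicator_def)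
  have Y_nonneg: "0 \<le> Y e" for e
    using T_nonneg[of e] le_funD[OF \<open>T \<le> Y\<close>, of e] by simp
  have T: "T \<in> Bv E b v"
    using Bv_downward_closed[OF Z T_nonneg] \<open>T \<le> Y\<close> \<open>Y \<le> Z\<close> by simp
  have Y: "Y \<in> Bv E b v"
    using Bv_downward_closed[OF Z Y_nonneg \<open>Y \<le> Z\<close>] .
  have "vnorm E v T = sum T (Ev E v)"
    using vnorm_Bv[OF T] .
  also have "\<dots> = sum z (Ev E v) + int (card A) - int (card D)"
    using A_Ev D_Ev sum_mult_indicator[OF finite_Ev, of "\<lambda>_. 1 :: int"]
    by (simp add: T_def sum.distrib sum_subtractf Int_absorb1)
  also have "\<dots> \<le> vnorm E v (C v z)"
    using card_le acc by (simp add: vnorm_Bv)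
  also have "\<dots> \<le> vnorm E v (C v Z)"
    using choice_size_mono[OF Z acc(1)] by (simp add: Z_def le_fun_def)
  finally have CZ: "C v Z = T"
    using choice_eq_if_le_of_size[OF Z T] choice_le_remove_paired[OF acc(1) add paired disj]
    by (simp add: Z_def T_def)
  then show ?thesis
    using choice_consistent[OF Z Y \<open>Y \<le> Z\<close>] \<open>T \<le> Y\<close> by (simp add: Y_def T_def)
qed

end

lemma legal_pair_add_in_Bv:
  assumes "gmatching E b C x" "legal_pair E b C f x a c"
  shows "restr E (Inr f) x + unitv a \<in> Bv E b (Inr f)"
proof (rule interesting_z_add_unitv_in_Bv)
  show "restr E (Inr f) x \<in> Bv E b (Inr f)"
    using assms(1) by (simp add: gmatching_def acceptable_def)
  have "snd a = f" "interesting E b C (Inr (snd a)) x a"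
    using assms(2) by (auto simp: legal_pair_def UFplus_def Ev_def)
  then show "interesting_z E b C (Inr f) (restr E (Inr f) x) a"
    by (simp add: interesting_def)
qed

theorem lemma3p6:
  fixes E :: "('w,'f) edge set" and b :: "('w,'f) vec"
    and C :: "('w,'f) vtx \<Rightarrow> ('w,'f) vec \<Rightarrow> ('w,'f) vec"
    and x xmax :: "('w,'f) vec" and f :: 'f and k :: nat
    and a c :: "nat \<Rightarrow> ('w,'f) edge" and I :: "nat set"
  assumes "gm_model E b C"
    and "stable E b C x"
    and "is_xmax E b C xmax" and "x \<noteq> xmax"
    and "\<forall>i \<in> {1..k}. legal_pair E b C f x (a i) (c i)"
    and "inj_on a {1..k}" and "inj_on c {1..k}" and "a ` {1..k} \<inter> c ` {1..k} = {}"
    and "I \<subseteq> {1..k}"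
  shows "C (Inr f) (restr E (Inr f) x + (\<Sum>i\<in>{1..k}. unitv (a i)) - (\<Sum>i\<in>I. unitv (c i)))
       = restr E (Inr f) x + (\<Sum>i\<in>{1..k}. unitv (a i)) - (\<Sum>i\<in>{1..k}. unitv (c i))"
proof -
  interpret choice_model E b C
    using assms(1) by (rule choice_model.intro)
  define z where "z = restr E (Inr f) x"
  have z: "z \<in> Bv E b (Inr f)" "C (Inr f) z = z"
    using assms(2) by (simp_all add: z_def stable_def gmatching_def acceptable_def)
  have legal: "z + unitv (a i) \<in> Bv E b (Inr f)"
      "C (Inr f) (z + unitv (a i)) = z + unitv (a i) - unitv (c i)" if "i \<in> {1..k}" for i
  proof -
    have "gmatching E b C x" "legal_pair E b C f x (a i) (c i)"
      using assms(2,5) that by (simp_all add: stable_def)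
    then show "z + unitv (a i) \<in> Bv E b (Inr f)"
        "C (Inr f) (z + unitv (a i)) = z + unitv (a i) - unitv (c i)"
      using legal_pair_add_in_Bv by (simp_all add: z_def legal_pair_def)
  qed
  have "card (a ` {1..k}) \<le> card (c ` {1..k})"
    using assms(6,7) by (simp add: card_image)
  then have "C (Inr f) (z + indicator (a ` {1..k}) - indicator (c ` I))
      = z + indicator (a ` {1..k}) - indicator (c ` {1..k})"
    using choice_add_remove_paired[OF z, of "a ` {1..k}" "c ` {1..k}" "c ` I"] legal assms(8,9)
    by blast
  moreover have "inj_on c I"
    using inj_on_subset[OF assms(7,9)] .
  ultimately show ?thesis
    using assms(6,7,9) finite_subset[OF assms(9)]
    by (simp add: z_def sum_unitv_image)
qed

end
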